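(* Every $\mathcal{L}$-definable subset $A$ of $K^{n}$ with an accumulation point $a\in K^{n}$ has, after a permutation of the coordinates, an $\mathcal{L}$-definable $x_{1}$-fiber shrinking at $a$.
   Context: Standing assumptions: $K$ is a Henselian valued field of equicharacteristic zero whose valuation $v:K\to\Gamma\cup\{\infty\}$ has rank one ($\Gamma\subset(\mathbb{R},+)$), with the topology of its absolute value; $\mathcal{L}$ is the three-sorted Denef–Pas language (sorts $K$, $\Gamma$, $\Bbbk$; maps $v$ and an angular component map $\overline{ac}:K\to\Bbbk$, multiplicative, $\overline{ac}(0)=0$, equal to the residue map on units of the valuation ring); definable means definable with parameters. Definition: let $A\subset K^{n}$ be $\mathcal{L}$-definable with accumulation point $a=(a_{1},\ldots,a_{n})$, and let $E\subset K$ be $\mathcal{L}$-definable with accumulation point $a_{1}$. An $\mathcal{L}$-definable family $\Phi=\bigcup_{t\in E}\{t\}\times\Phi_{t}\subset A$ (with $\Phi_t\subset K^{n-1}$) is an $\mathcal{L}$-definable $x_{1}$-fiber shrinking for $A$ at $a$ if for every neighbourhood $U$ of $(a_{2},\ldots,a_{n})$ in $K^{n-1}$ there is a neighbourhood $V$ of $a_{1}$ in $K$ with $\emptyset\neq\Phi_{t}\subset U$ for every $t\in V\cap E$, $t\neq a_{1}$. (For $n=1$, $A$ itself is an $x_1$-fiber shrinking.) *)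

theory Defs
  imports "HOL-Computational_Algebra.Polynomial" "HOL-Library.Extended_Real"
          "HOL-Combinatorics.Permutations"
begin

text \<open>The residue map res is defined on the valuation ring O = {x. v x >= 0}; it is a
  surjective ring homomorphism O -> 'r with kernel the maximal ideal {x. v x > 0},
  so 'r is (isomorphic to) the residue field.  ac is an angular component map.\<close>

definition valuation_ring :: "('k::field \<Rightarrow> ereal) \<Rightarrow> 'k set" where
  "valuation_ring v = {x. v x \<ge> 0}"

definition henselian_rank1_eq0_acfield ::
  "('k::field \<Rightarrow> ereal) \<Rightarrow> ('k \<Rightarrow> 'r::field_char_0) \<Rightarrow> ('k \<Rightarrow> 'r) \<Rightarrow> bool" where
  "henselian_rank1_eq0_acfield v res ac \<longleftrightarrow>
     \<comment> \<open>rank-one (real-valued) valuation\<close>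
     (\<forall>x. v x = \<infinity> \<longleftrightarrow> x = 0) \<and>
     (\<forall>x. x \<noteq> 0 \<longrightarrow> v x \<noteq> -\<infinity> \<and> v x \<noteq> \<infinity>) \<and>
     (\<forall>x y. v (x * y) = v x + v y) \<and>
     (\<forall>x y. min (v x) (v y) \<le> v (x + y)) \<and>
     (\<exists>x. v x \<noteq> 0 \<and> v x \<noteq> \<infinity>) \<and>
     \<comment> \<open>residue map: surjective ring homomorphism O -> 'r with kernel the maximal ideal\<close>
     (\<forall>x\<in>valuation_ring v. \<forall>y\<in>valuation_ring v. res (x + y) = res x + res y) \<and>
     (\<forall>x\<in>valuation_ring v. \<forall>y\<in>valuation_ring v. res (x * y) = res x * res y) \<and>
     res 1 = 1 \<and>
     (\<forall>x\<in>valuation_ring v. res x = 0 \<longleftrightarrow> v x > 0) \<and>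
     (\<forall>r. \<exists>x\<in>valuation_ring v. res x = r) \<and>
     \<comment> \<open>angular component map\<close>
     (\<forall>x y. ac (x * y) = ac x * ac y) \<and>
     ac 0 = 0 \<and>
     (\<forall>x. v x = 0 \<longrightarrow> ac x = res x) \<and>
     \<comment> \<open>Henselian (Hensel's lemma for simple roots)\<close>
     (\<forall>f a. (\<forall>i. coeff f i \<in> valuation_ring v) \<and> a \<in> valuation_ring v \<and>
            v (poly f a) > 0 \<and> v (poly (pderiv f) a) = 0 \<longrightarrow>
            (\<exists>b\<in>valuation_ring v. poly f b = 0 \<and> v (b - a) > 0))"

section \<open>The three-sorted Denef--Pas language\<close>

datatype 'k kterm = KVar nat | KConst 'k | KAdd "'k kterm" "'k kterm"
  | KMul "'k kterm" "'k kterm" | KNeg "'k kterm"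

datatype 'k gterm = GVar nat | GVal "'k kterm" | GAdd "'k gterm" "'k gterm"

datatype 'k rterm = RVar nat | RAc "'k kterm" | RAdd "'k rterm" "'k rterm"
  | RMul "'k rterm" "'k rterm" | RNeg "'k rterm"

datatype 'k fm = FKEq "'k kterm" "'k kterm" | FGLe "'k gterm" "'k gterm"
  | FREq "'k rterm" "'k rterm" | FNot "'k fm" | FAnd "'k fm" "'k fm"
  | FExK nat "'k fm" | FExG nat "'k fm" | FExR nat "'k fm"

primrec keval :: "(nat \<Rightarrow> 'k::field) \<Rightarrow> 'k kterm \<Rightarrow> 'k" where
  "keval \<rho> (KVar i) = \<rho> i"
| "keval \<rho> (KConst c) = c"
| "keval \<rho> (KAdd s t) = keval \<rho> s + keval \<rho> t"
| "keval \<rho> (KMul s t) = keval \<rho> s * keval \<rho> t"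
| "keval \<rho> (KNeg s) = - keval \<rho> s"

primrec geval :: "('k::field \<Rightarrow> ereal) \<Rightarrow> (nat \<Rightarrow> 'k) \<Rightarrow> (nat \<Rightarrow> ereal) \<Rightarrow> 'k gterm \<Rightarrow> ereal" where
  "geval v \<rho> \<gamma> (GVar i) = \<gamma> i"
| "geval v \<rho> \<gamma> (GVal t) = v (keval \<rho> t)"
| "geval v \<rho> \<gamma> (GAdd s t) = geval v \<rho> \<gamma> s + geval v \<rho> \<gamma> t"

primrec reval :: "('k::field \<Rightarrow> 'r::field) \<Rightarrow> (nat \<Rightarrow> 'k) \<Rightarrow> (nat \<Rightarrow> 'r) \<Rightarrow> 'k rterm \<Rightarrow> 'r" where
  "reval ac \<rho> \<xi> (RVar i) = \<xi> i"
| "reval ac \<rho> \<xi> (RAc t) = ac (keval \<rho> t)"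
| "reval ac \<rho> \<xi> (RAdd s t) = reval ac \<rho> \<xi> s + reval ac \<rho> \<xi> t"
| "reval ac \<rho> \<xi> (RMul s t) = reval ac \<rho> \<xi> s * reval ac \<rho> \<xi> t"
| "reval ac \<rho> \<xi> (RNeg s) = - reval ac \<rho> \<xi> s"

text \<open>The value-group sort is interpreted as the set of values v(K) (i.e. Gamma with infinity).\<close>
primrec sat :: "('k::field \<Rightarrow> ereal) \<Rightarrow> ('k \<Rightarrow> 'r::field) \<Rightarrow>
    (nat \<Rightarrow> 'k) \<Rightarrow> (nat \<Rightarrow> ereal) \<Rightarrow> (nat \<Rightarrow> 'r) \<Rightarrow> 'k fm \<Rightarrow> bool" where
  "sat v ac \<rho> \<gamma> \<xi> (FKEq s t) = (keval \<rho> s = keval \<rho> t)"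
| "sat v ac \<rho> \<gamma> \<xi> (FGLe s t) = (geval v \<rho> \<gamma> s \<le> geval v \<rho> \<gamma> t)"
| "sat v ac \<rho> \<gamma> \<xi> (FREq s t) = (reval ac \<rho> \<xi> s = reval ac \<rho> \<xi> t)"
| "sat v ac \<rho> \<gamma> \<xi> (FNot \<phi>) = (\<not> sat v ac \<rho> \<gamma> \<xi> \<phi>)"
| "sat v ac \<rho> \<gamma> \<xi> (FAnd \<phi> \<psi>) = (sat v ac \<rho> \<gamma> \<xi> \<phi> \<and> sat v ac \<rho> \<gamma> \<xi> \<psi>)"
| "sat v ac \<rho> \<gamma> \<xi> (FExK i \<phi>) = (\<exists>x. sat v ac (\<rho>(i := x)) \<gamma> \<xi> \<phi>)"
| "sat v ac \<rho> \<gamma> \<xi> (FExG i \<phi>) = (\<exists>g\<in>range v. sat v ac \<rho> (\<gamma>(i := g)) \<xi> \<phi>)"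
| "sat v ac \<rho> \<gamma> \<xi> (FExR i \<phi>) = (\<exists>r. sat v ac \<rho> \<gamma> (\<xi>(i := r)) \<phi>)"

text \<open>Points of K^n are lists of length n.  A set S of such points is L-definable (with
  parameters, which enter as constants KConst) if it is defined by a formula whose
  K-variables 0..n-1 are the coordinates; remaining free variables are assigned fixed
  values (0), which only amounts to further parameters.\<close>
definition definable :: "('k::field \<Rightarrow> ereal) \<Rightarrow> ('k \<Rightarrow> 'r::field) \<Rightarrow> nat \<Rightarrow> 'k list set \<Rightarrow> bool" where
  "definable v ac n S \<longleftrightarrow>
     (\<exists>\<phi>. S = {xs. length xs = n \<and>
                  sat v ac (\<lambda>i. if i < n then xs ! i else 0) (\<lambda>_. 0) (\<lambda>_. 0) \<phi>})"

definition definable1 :: "('k::field \<Rightarrow> ereal) \<Rightarrow> ('k \<Rightarrow> 'r::field) \<Rightarrow> 'k set \<Rightarrow> bool" where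
  "definable1 v ac E \<longleftrightarrow> definable v ac 1 ((\<lambda>t. [t]) ` E)"

definition nbhd :: "('k::field \<Rightarrow> ereal) \<Rightarrow> nat \<Rightarrow> 'k list \<Rightarrow> 'k list set \<Rightarrow> bool" where
  "nbhd v n a U \<longleftrightarrow>
     (\<exists>\<gamma>::real. {x. length x = n \<and> (\<forall>i<n. v (x ! i - a ! i) > ereal \<gamma>)} \<subseteq> U)"

definition nbhd1 :: "('k::field \<Rightarrow> ereal) \<Rightarrow> 'k \<Rightarrow> 'k set \<Rightarrow> bool" where
  "nbhd1 v a V \<longleftrightarrow> (\<exists>\<gamma>::real. {x. v (x - a) > ereal \<gamma>} \<subseteq> V)"

definition acc_point :: "('k::field \<Rightarrow> ereal) \<Rightarrow> nat \<Rightarrow> 'k list set \<Rightarrow> 'k list \<Rightarrow> bool" where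
  "acc_point v n A a \<longleftrightarrow> length a = n \<and>
     (\<forall>U. nbhd v n a U \<longrightarrow> (\<exists>x\<in>A. x \<noteq> a \<and> x \<in> U))"

definition acc_point1 :: "('k::field \<Rightarrow> ereal) \<Rightarrow> 'k set \<Rightarrow> 'k \<Rightarrow> bool" where
  "acc_point1 v E a \<longleftrightarrow> (\<forall>V. nbhd1 v a V \<longrightarrow> (\<exists>t\<in>E. t \<noteq> a \<and> t \<in> V))"

definition fiber :: "'k list set \<Rightarrow> 'k \<Rightarrow> 'k list set" where
  "fiber \<Phi> t = {y. t # y \<in> \<Phi>}"

definition fiber_shrinking ::
  "('k::field \<Rightarrow> ereal) \<Rightarrow> ('k \<Rightarrow> 'r::field) \<Rightarrow> nat \<Rightarrow> 'k list set \<Rightarrow> 'k list \<Rightarrow>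
   'k set \<Rightarrow> 'k list set \<Rightarrow> bool" where
  "fiber_shrinking v ac n A a E \<Phi> \<longleftrightarrow>
     definable1 v ac E \<and> acc_point1 v E (hd a) \<and>
     definable v ac n \<Phi> \<and> \<Phi> \<subseteq> A \<and>
     \<Phi> = (\<Union>t\<in>E. (\<lambda>y. t # y) ` fiber \<Phi> t) \<and>
     (\<forall>U. nbhd v (n - 1) (tl a) U \<longrightarrow>
        (\<exists>V. nbhd1 v (hd a) V \<and>
           (\<forall>t\<in>V \<inter> E. t \<noteq> hd a \<longrightarrow> fiber \<Phi> t \<noteq> {} \<and> fiber \<Phi> t \<subseteq> U)))"

definition perm_coords :: "(nat \<Rightarrow> nat) \<Rightarrow> 'k list \<Rightarrow> 'k list" where
  "perm_coords \<sigma> xs = map (\<lambda>i. xs ! \<sigma> i) [0..<length xs]"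

end

theory Submission
  imports Defs
begin

text \<open>Among the points of A approaching a, choose for each one the coordinate j in which
  it is closest to a in valuation, i.e. where v(x_j - a_j) is minimal.  Since there are
  only n coordinates, one index j serves for points arbitrarily close to a.  Moving
  coordinate j to the front, the points of A whose first coordinate is this closest one
  form a definable family: as soon as v(t - a_1) > \<gamma>, every point t # y of the family has
  all coordinates of y within \<gamma> of a, so the fibers shrink to the remaining coordinates
  of a.\<close>

primrec rename_kterm :: "(nat \<Rightarrow> nat) \<Rightarrow> 'k kterm \<Rightarrow> 'k kterm" where
  "rename_kterm f (KVar i) = KVar (f i)"
| "rename_kterm f (KConst c) = KConst c"
| "rename_kterm f (KAdd s t) = KAdd (rename_kterm f s) (rename_kterm f t)"
| "rename_kterm f (KMul s t) = KMul (rename_kterm f s) (rename_kterm f t)"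
| "rename_kterm f (KNeg s) = KNeg (rename_kterm f s)"

primrec rename_gterm :: "(nat \<Rightarrow> nat) \<Rightarrow> 'k gterm \<Rightarrow> 'k gterm" where
  "rename_gterm f (GVar i) = GVar i"
| "rename_gterm f (GVal t) = GVal (rename_kterm f t)"
| "rename_gterm f (GAdd s t) = GAdd (rename_gterm f s) (rename_gterm f t)"

primrec rename_rterm :: "(nat \<Rightarrow> nat) \<Rightarrow> 'k rterm \<Rightarrow> 'k rterm" where
  "rename_rterm f (RVar i) = RVar i"
| "rename_rterm f (RAc t) = RAc (rename_kterm f t)"
| "rename_rterm f (RAdd s t) = RAdd (rename_rterm f s) (rename_rterm f t)"
| "rename_rterm f (RMul s t) = RMul (rename_rterm f s) (rename_rterm f t)"
| "rename_rterm f (RNeg s) = RNeg (rename_rterm f s)"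

primrec rename_fm :: "(nat \<Rightarrow> nat) \<Rightarrow> 'k fm \<Rightarrow> 'k fm" where
  "rename_fm f (FKEq s t) = FKEq (rename_kterm f s) (rename_kterm f t)"
| "rename_fm f (FGLe s t) = FGLe (rename_gterm f s) (rename_gterm f t)"
| "rename_fm f (FREq s t) = FREq (rename_rterm f s) (rename_rterm f t)"
| "rename_fm f (FNot p) = FNot (rename_fm f p)"
| "rename_fm f (FAnd p q) = FAnd (rename_fm f p) (rename_fm f q)"
| "rename_fm f (FExK i p) = FExK (f i) (rename_fm f p)"
| "rename_fm f (FExG i p) = FExG i (rename_fm f p)"
| "rename_fm f (FExR i p) = FExR i (rename_fm f p)"

lemma keval_rename_kterm: "keval \<rho> (rename_kterm f t) = keval (\<rho> \<circ> f) t"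
  by (induct t) auto

lemma geval_rename_gterm: "geval v \<rho> \<gamma> (rename_gterm f t) = geval v (\<rho> \<circ> f) \<gamma> t"
  by (induct t) (auto simp: keval_rename_kterm comp_def)

lemma reval_rename_rterm: "reval ac \<rho> \<xi> (rename_rterm f t) = reval ac (\<rho> \<circ> f) \<xi> t"
  by (induct t) (auto simp: keval_rename_kterm comp_def)

lemma sat_rename_fm:
  assumes "inj f"
  shows "sat v ac \<rho> \<gamma> \<xi> (rename_fm f \<phi>) = sat v ac (\<rho> \<circ> f) \<gamma> \<xi> \<phi>"
proof (induct \<phi> arbitrary: \<rho> \<gamma> \<xi>)
  case (FExK i p)
  have "\<And>x. \<rho>(f i := x) \<circ> f = (\<rho> \<circ> f)(i := x)"
    using assms by (auto simp: fun_eq_iff inj_eq)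
  then show ?case using FExK by (simp only: rename_fm.simps sat.simps)
qed (auto simp: keval_rename_kterm geval_rename_gterm reval_rename_rterm)

primrec fm_conj :: "'k fm list \<Rightarrow> 'k fm" where
  "fm_conj [] = FKEq (KVar 0) (KVar 0)"
| "fm_conj (p # ps) = FAnd p (fm_conj ps)"

lemma sat_fm_conj: "sat v ac \<rho> \<gamma> \<xi> (fm_conj ps) \<longleftrightarrow> (\<forall>p\<in>set ps. sat v ac \<rho> \<gamma> \<xi> p)"
  by (induct ps) auto

subsection \<open>Closure properties of definable sets\<close>

definition coord_env :: "nat \<Rightarrow> 'k::zero list \<Rightarrow> nat \<Rightarrow> 'k" where
  "coord_env n xs = (\<lambda>i. if i < n then xs ! i else 0)"

lemma definable_iff_coord_env:
  "definable v ac n S \<longleftrightarrow>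
     (\<exists>\<phi>. S = {xs. length xs = n \<and> sat v ac (coord_env n xs) (\<lambda>_. 0) (\<lambda>_. 0) \<phi>})"
  by (simp add: definable_def coord_env_def)

lemma coord_env_snoc:
  "length xs = m \<Longrightarrow> (coord_env m xs)(m := x) = coord_env (Suc m) (xs @ [x])"
  by (auto simp: coord_env_def fun_eq_iff nth_append)

lemma perm_coords_nth [simp]: "i < length xs \<Longrightarrow> perm_coords \<sigma> xs ! i = xs ! \<sigma> i"
  by (simp add: perm_coords_def)

lemma length_perm_coords [simp]: "length (perm_coords \<sigma> xs) = length xs"
  by (simp add: perm_coords_def)

lemma coord_env_perm_coords:
  assumes "\<tau> permutes {..<n}" "length y = n"
  shows "coord_env n (perm_coords \<tau> y) = coord_env n y \<circ> \<tau>"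
proof
  fix k
  show "coord_env n (perm_coords \<tau> y) k = (coord_env n y \<circ> \<tau>) k"
    using assms permutes_in_image[OF assms(1)] permutes_not_in[OF assms(1)]
    by (cases "k < n") (auto simp: coord_env_def)
qed

lemma perm_coords_inv_cancel:
  assumes "\<sigma> permutes {..<length xs}"
  shows "perm_coords (inv \<sigma>) (perm_coords \<sigma> xs) = xs"
proof (rule nth_equalityI)
  fix i assume "i < length (perm_coords (inv \<sigma>) (perm_coords \<sigma> xs))"
  then show "perm_coords (inv \<sigma>) (perm_coords \<sigma> xs) ! i = xs ! i"
    using permutes_in_image[OF permutes_inv[OF assms]] permutes_inverses(1)[OF assms] by simp
qed simp

lemma length_definable: "definable v ac n S \<Longrightarrow> xs \<in> S \<Longrightarrow> length xs = n"
  unfolding definable_def by auto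

lemma definable_restrict:
  assumes "definable v ac n S"
  shows "definable v ac n {xs \<in> S. sat v ac (coord_env n xs) (\<lambda>_. 0) (\<lambda>_. 0) \<psi>}"
proof -
  obtain \<phi> where "S = {xs. length xs = n \<and> sat v ac (coord_env n xs) (\<lambda>_. 0) (\<lambda>_. 0) \<phi>}"
    using assms unfolding definable_iff_coord_env by blast
  then have "{xs \<in> S. sat v ac (coord_env n xs) (\<lambda>_. 0) (\<lambda>_. 0) \<psi>}
      = {xs. length xs = n \<and> sat v ac (coord_env n xs) (\<lambda>_. 0) (\<lambda>_. 0) (FAnd \<phi> \<psi>)}"
    by auto
  then show ?thesis unfolding definable_iff_coord_env by blast
qed

lemma definable_perm_coords:
  assumes "\<sigma> permutes {..<n}" "definable v ac n A"
  shows "definable v ac n (perm_coords \<sigma> ` A)"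
proof -
  obtain \<phi> where A: "A = {xs. length xs = n \<and> sat v ac (coord_env n xs) (\<lambda>_. 0) (\<lambda>_. 0) \<phi>}"
    using assms(2) unfolding definable_iff_coord_env by blast
  have inv: "inv \<sigma> permutes {..<n}"
    using permutes_inv[OF assms(1)] .
  have "y \<in> perm_coords \<sigma> ` A \<longleftrightarrow> length y = n \<and> perm_coords (inv \<sigma>) y \<in> A" for y
  proof
    assume "y \<in> perm_coords \<sigma> ` A"
    then show "length y = n \<and> perm_coords (inv \<sigma>) y \<in> A"
      using A assms(1) perm_coords_inv_cancel by fastforce
  next
    assume y: "length y = n \<and> perm_coords (inv \<sigma>) y \<in> A"
    then have "perm_coords (inv (inv \<sigma>)) (perm_coords (inv \<sigma>) y) = y"
      using inv perm_coords_inv_cancel by auto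
    then show "y \<in> perm_coords \<sigma> ` A"
      using y inv_inv_eq[OF permutes_bij[OF assms(1)]] by (metis image_eqI)
  qed
  moreover have "perm_coords (inv \<sigma>) y \<in> A \<longleftrightarrow>
      sat v ac (coord_env n y) (\<lambda>_. 0) (\<lambda>_. 0) (rename_fm (inv \<sigma>) \<phi>)" if "length y = n" for y
    using A that by (simp add: coord_env_perm_coords[OF inv] sat_rename_fm[OF permutes_inj[OF inv]])
  ultimately have "perm_coords \<sigma> ` A =
      {y. length y = n \<and> sat v ac (coord_env n y) (\<lambda>_. 0) (\<lambda>_. 0) (rename_fm (inv \<sigma>) \<phi>)}"
    by blast
  then show ?thesis unfolding definable_iff_coord_env by blast
qed

lemma butlast_image_iff:
  assumes "\<And>s. s \<in> S \<Longrightarrow> length s = Suc m"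
  shows "ys \<in> butlast ` S \<longleftrightarrow> length ys = m \<and> (\<exists>x. ys @ [x] \<in> S)"
proof
  assume "ys \<in> butlast ` S"
  then obtain s where s: "s \<in> S" "ys = butlast s" by blast
  then have "s = ys @ [last s]"
    using assms by (metis append_butlast_last_id list.size(3) nat.distinct(1))
  then show "length ys = m \<and> (\<exists>x. ys @ [x] \<in> S)"
    using s assms by (metis length_butlast diff_Suc_1)
next
  assume "length ys = m \<and> (\<exists>x. ys @ [x] \<in> S)"
  then show "ys \<in> butlast ` S" by (metis butlast_snoc image_eqI)
qed

lemma definable_butlast:
  assumes "definable v ac (Suc m) S"
  shows "definable v ac m (butlast ` S)"
proof -
  obtain \<phi> where S: "S = {xs. length xs = Suc m \<and>
      sat v ac (coord_env (Suc m) xs) (\<lambda>_. 0) (\<lambda>_. 0) \<phi>}"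
    using assms unfolding definable_iff_coord_env by blast
  have "ys \<in> butlast ` S \<longleftrightarrow>
      length ys = m \<and> sat v ac (coord_env m ys) (\<lambda>_. 0) (\<lambda>_. 0) (FExK m \<phi>)" for ys
  proof -
    have "ys \<in> butlast ` S \<longleftrightarrow> length ys = m \<and> (\<exists>x. ys @ [x] \<in> S)"
      using S by (intro butlast_image_iff) blast
    also have "\<dots> \<longleftrightarrow> length ys = m \<and>
        (\<exists>x. sat v ac (coord_env (Suc m) (ys @ [x])) (\<lambda>_. 0) (\<lambda>_. 0) \<phi>)"
      using S by auto
    also have "\<dots> \<longleftrightarrow> length ys = m \<and> sat v ac (coord_env m ys) (\<lambda>_. 0) (\<lambda>_. 0) (FExK m \<phi>)"
      by (cases "length ys = m") (simp_all add: coord_env_snoc)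
    finally show ?thesis .
  qed
  then have "butlast ` S = {ys. length ys = m \<and>
      sat v ac (coord_env m ys) (\<lambda>_. 0) (\<lambda>_. 0) (FExK m \<phi>)}"
    by blast
  then show ?thesis unfolding definable_iff_coord_env by blast
qed

lemma definable_take:
  assumes "definable v ac m S" "k \<le> m"
  shows "definable v ac k (take k ` S)"
  using assms
proof (induct "m - k" arbitrary: k)
  case 0
  then have "take k ` S = S"
    using length_definable[OF 0(2)] by (force simp: image_iff)
  then show ?case using 0 by simp
next
  case (Suc d)
  then have "definable v ac k (butlast ` take (Suc k) ` S)"
    by (intro definable_butlast) simp
  moreover have "butlast ` take (Suc k) ` S = take k ` S"
    using length_definable[OF Suc.prems(1)] Suc.hyps(2) by (simp add: image_image butlast_take)
  ultimately show ?case by simp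
qed

lemma definable1_hd_image:
  assumes "definable v ac n \<Phi>" "0 < n"
  shows "definable1 v ac (hd ` \<Phi>)"
proof -
  have "take 1 y = [hd y]" if "y \<in> \<Phi>" for y
    using length_definable[OF assms(1) that] assms(2) by (cases y) auto
  then have "(\<lambda>t. [t]) ` hd ` \<Phi> = take 1 ` \<Phi>"
    by (simp add: image_image)
  then show ?thesis
    unfolding definable1_def using definable_take[OF assms(1), of 1] assms(2) by simp
qed

subsection \<open>Choosing the closest coordinate\<close>

lemma finite_bex_all_if_all_bex_antimono:
  fixes P :: "'a \<Rightarrow> real \<Rightarrow> bool"
  assumes "finite J" and "\<And>\<gamma>. \<exists>j\<in>J. P j \<gamma>"
    and "\<And>j \<gamma> \<gamma>'. P j \<gamma>' \<Longrightarrow> \<gamma> \<le> \<gamma>' \<Longrightarrow> P j \<gamma>"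
  shows "\<exists>j\<in>J. \<forall>\<gamma>. P j \<gamma>"
proof (rule ccontr)
  assume "\<not> ?thesis"
  then obtain g where g: "\<And>j. j \<in> J \<Longrightarrow> \<not> P j (g j)" by metis
  obtain j where j: "j \<in> J" "P j (Max (g ` J))" using assms(2) by blast
  then have "P j (g j)" using assms(1,3) by (meson Max_ge finite_imageI imageI)
  then show False using g j(1) by blast
qed

definition approaches_closest_in :: "('k::field \<Rightarrow> ereal) \<Rightarrow> nat \<Rightarrow> 'k list set \<Rightarrow> 'k list \<Rightarrow> nat \<Rightarrow> bool"
  where "approaches_closest_in v n A a j \<longleftrightarrow>
    (\<forall>\<gamma>::real. \<exists>x\<in>A. x ! j \<noteq> a ! j \<and>
       (\<forall>i<n. ereal \<gamma> < v (x ! i - a ! i) \<and> v (x ! j - a ! j) \<le> v (x ! i - a ! i)))"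

lemma acc_point_approaches_closest_in:
  assumes v_infinity: "\<And>x. v x = \<infinity> \<longleftrightarrow> x = 0"
    and "definable v ac n A" "acc_point v n A a"
  shows "\<exists>j<n. approaches_closest_in v n A a j"
proof -
  define P where "P j \<gamma> \<longleftrightarrow> (\<exists>x\<in>A. x ! j \<noteq> a ! j \<and>
      (\<forall>i<n. ereal \<gamma> < v (x ! i - a ! i) \<and> v (x ! j - a ! j) \<le> v (x ! i - a ! i)))"
    for j \<gamma>
  have "\<exists>j\<in>{..<n}. P j \<gamma>" for \<gamma> :: real
  proof -
    have "nbhd v n a {x. length x = n \<and> (\<forall>i<n. ereal \<gamma> < v (x ! i - a ! i))}"
      unfolding nbhd_def by blast
    then obtain x where x: "x \<in> A" "x \<noteq> a" "\<forall>i<n. ereal \<gamma> < v (x ! i - a ! i)"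
      using assms(3) unfolding acc_point_def by blast
    have "length x = n" "length a = n"
      using x(1) length_definable[OF assms(2)] assms(3) unfolding acc_point_def by auto
    then obtain i where i: "i < n" "x ! i \<noteq> a ! i"
      using x(2) nth_equalityI by metis
    obtain j where j: "j < n" "\<forall>k<n. v (x ! j - a ! j) \<le> v (x ! k - a ! k)"
      using ex_min_if_finite[of "(\<lambda>k. v (x ! k - a ! k)) ` {..<n}"] i(1)
      by (fastforce simp: not_less)
    have "v (x ! j - a ! j) \<noteq> \<infinity>"
      using j(2) i v_infinity by (metis ereal_infty_less_eq(1) right_minus_eq)
    then have "x ! j \<noteq> a ! j" using v_infinity by auto
    then show ?thesis using j x(1,3) unfolding P_def by blast
  qed
  moreover have "P j \<gamma>" if "P j \<gamma>'" "\<gamma> \<le> \<gamma>'" for j \<gamma> \<gamma>'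
    using that unfolding P_def by (meson ereal_less_eq(3) le_less_trans)
  ultimately have "\<exists>j\<in>{..<n}. \<forall>\<gamma>. P j \<gamma>"
    by (intro finite_bex_all_if_all_bex_antimono) auto
  then show ?thesis
    unfolding P_def approaches_closest_in_def by auto
qed

lemma approaches_closest_in_perm_coords:
  assumes "\<sigma> permutes {..<n}" "j < n" "length a = n" "\<And>x. x \<in> A \<Longrightarrow> length x = n"
    and "approaches_closest_in v n A a (\<sigma> j)"
  shows "approaches_closest_in v n (perm_coords \<sigma> ` A) (perm_coords \<sigma> a) j"
  unfolding approaches_closest_in_def
proof
  fix \<gamma> :: real
  obtain x where x: "x \<in> A" "x ! \<sigma> j \<noteq> a ! \<sigma> j"
    and close: "\<forall>i<n. ereal \<gamma> < v (x ! i - a ! i) \<and> v (x ! \<sigma> j - a ! \<sigma> j) \<le> v (x ! i - a ! i)"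
    using assms(5) unfolding approaches_closest_in_def by blast
  have "\<sigma> i < n" if "i < n" for i
    using permutes_in_image[OF assms(1)] that by simp
  then show "\<exists>y\<in>perm_coords \<sigma> ` A. y ! j \<noteq> perm_coords \<sigma> a ! j \<and>
      (\<forall>i<n. ereal \<gamma> < v (y ! i - perm_coords \<sigma> a ! i) \<and>
             v (y ! j - perm_coords \<sigma> a ! j) \<le> v (y ! i - perm_coords \<sigma> a ! i))"
    using x close assms(2-4) by (intro bexI[of _ "perm_coords \<sigma> x"]) auto
qed

lemma Union_fibers_hd_image:
  assumes "[] \<notin> \<Phi>"
  shows "\<Phi> = (\<Union>t\<in>hd ` \<Phi>. (\<lambda>y. t # y) ` fiber \<Phi> t)"
proof (intro set_eqI iffI)
  fix y assume "y \<in> \<Phi>"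
  then have "y = hd y # tl y"
    using assms by (cases y) auto
  then show "y \<in> (\<Union>t\<in>hd ` \<Phi>. (\<lambda>y. t # y) ` fiber \<Phi> t)"
    using \<open>y \<in> \<Phi>\<close> unfolding fiber_def by (intro UN_I[of "hd y"]) auto
qed (auto simp: fiber_def)

lemma fiber_shrinking_closest_first:
  assumes "definable v ac n B" "length a = n" "0 < n"
    and "approaches_closest_in v n B a 0"
  defines "\<Phi> \<equiv> {y \<in> B. y ! 0 \<noteq> a ! 0 \<and> (\<forall>i<n. v (y ! 0 - a ! 0) \<le> v (y ! i - a ! i))}"
  shows "fiber_shrinking v ac n B a (hd ` \<Phi>) \<Phi>"
proof -
  have length_\<Phi>: "length y = n" if "y \<in> \<Phi>" for y
    using that length_definable[OF assms(1)] unfolding \<Phi>_def by blast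
  have hd_nth: "hd y = y ! 0" if "length y = n" for y :: "'a list"
    using that assms(3) by (cases y) auto
  have "[] \<notin> \<Phi>"
    using length_\<Phi> assms(3) by fastforce
  then have hd_tl: "hd y # tl y \<in> \<Phi>" if "y \<in> \<Phi>" for y
    using that by (cases y) auto
  have definable_\<Phi>: "definable v ac n \<Phi>"
  proof -
    define diff where "diff i = GVal (KAdd (KVar i) (KNeg (KConst (a ! i))))" for i
    define \<psi> where "\<psi> = FAnd (FNot (FKEq (KVar 0) (KConst (a ! 0))))
      (fm_conj (map (\<lambda>i. FGLe (diff 0) (diff i)) [0..<n]))"
    have "\<Phi> = {y \<in> B. sat v ac (coord_env n y) (\<lambda>_. 0) (\<lambda>_. 0) \<psi>}"
      using assms(3) by (auto simp: \<Phi>_def \<psi>_def diff_def coord_env_def sat_fm_conj)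
    then show ?thesis
      using definable_restrict[OF assms(1)] by presburger
  qed
  moreover have "acc_point1 v (hd ` \<Phi>) (hd a)"
    unfolding acc_point1_def nbhd1_def
  proof (intro allI impI)
    fix V assume "\<exists>\<gamma>::real. {x. ereal \<gamma> < v (x - hd a)} \<subseteq> V"
    then obtain \<gamma> :: real where "{x. ereal \<gamma> < v (x - hd a)} \<subseteq> V" by blast
    moreover obtain y where "y \<in> B" "y ! 0 \<noteq> a ! 0"
        "\<forall>i<n. ereal \<gamma> < v (y ! i - a ! i) \<and> v (y ! 0 - a ! 0) \<le> v (y ! i - a ! i)"
      using assms(4) unfolding approaches_closest_in_def by blast
    moreover from this have "y \<in> \<Phi>" unfolding \<Phi>_def by blast
    ultimately show "\<exists>t\<in>hd ` \<Phi>. t \<noteq> hd a \<and> t \<in> V"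
      using assms(2,3) hd_nth length_\<Phi> by (intro bexI[of _ "hd y"]) auto
  qed
  moreover have "\<exists>W. nbhd1 v (hd a) W \<and>
      (\<forall>t\<in>W \<inter> hd ` \<Phi>. t \<noteq> hd a \<longrightarrow> fiber \<Phi> t \<noteq> {} \<and> fiber \<Phi> t \<subseteq> U)"
    if U: "nbhd v (n - 1) (tl a) U" for U
  proof -
    obtain \<gamma> :: real
      where \<gamma>: "{x. length x = n - 1 \<and> (\<forall>i<n - 1. ereal \<gamma> < v (x ! i - tl a ! i))} \<subseteq> U"
      using U unfolding nbhd_def by blast
    have "z \<in> U" if "ereal \<gamma> < v (t - hd a)" "t # z \<in> \<Phi>" for t z
    proof -
      have "ereal \<gamma> < v (z ! i - tl a ! i)" if "i < n - 1" for i
      proof -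
        have "v ((t # z) ! 0 - a ! 0) \<le> v ((t # z) ! Suc i - a ! Suc i)"
          using \<open>t # z \<in> \<Phi>\<close> that unfolding \<Phi>_def
          by (metis (no_types, lifting) mem_Collect_eq less_diff_conv Suc_eq_plus1)
        moreover have "tl a ! i = a ! Suc i" "hd a = a ! 0"
          using that assms(2,3) hd_nth by (auto simp: nth_tl)
        ultimately show ?thesis
          using \<open>ereal \<gamma> < v (t - hd a)\<close> by simp
      qed
      then show ?thesis using \<gamma> length_\<Phi>[OF \<open>t # z \<in> \<Phi>\<close>] by auto
    qed
    then show ?thesis
      unfolding nbhd1_def fiber_def using hd_tl
      by (intro exI[of _ "{x. ereal \<gamma> < v (x - hd a)}"]) auto
  qed
  moreover have "\<Phi> \<subseteq> B"
    unfolding \<Phi>_def by blast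
  ultimately show ?thesis
    unfolding fiber_shrinking_def
    using definable1_hd_image[OF definable_\<Phi> assms(3)] Union_fibers_hd_image[OF \<open>[] \<notin> \<Phi>\<close>]
    by blast
qed

theorem proposition6p1:
  fixes v :: "'k::field \<Rightarrow> ereal" and res ac :: "'k \<Rightarrow> 'r::field_char_0"
    and n :: nat and A :: "'k list set" and a :: "'k list"
  assumes "henselian_rank1_eq0_acfield v res ac"
    and "definable v ac n A"
    and "acc_point v n A a"
  shows "\<exists>\<sigma>. \<sigma> permutes {..<n} \<and>
           (\<exists>E \<Phi>. fiber_shrinking v ac n (perm_coords \<sigma> ` A) (perm_coords \<sigma> a) E \<Phi>)"
proof -
  have "\<And>x. v x = \<infinity> \<longleftrightarrow> x = 0"
    using assms(1) unfolding henselian_rank1_eq0_acfield_def by blast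
  then obtain j where j: "j < n" "approaches_closest_in v n A a j"
    using acc_point_approaches_closest_in assms(2,3) by blast
  define \<sigma> where "\<sigma> = transpose 0 j"
  have \<sigma>: "\<sigma> permutes {..<n}"
    unfolding \<sigma>_def using j(1) by (intro permutes_swap_id) auto
  have "length (perm_coords \<sigma> a) = n"
    using assms(3) unfolding acc_point_def by simp
  moreover have "approaches_closest_in v n (perm_coords \<sigma> ` A) (perm_coords \<sigma> a) 0"
    using approaches_closest_in_perm_coords[OF \<sigma>, of 0 a A] j length_definable[OF assms(2)]
      \<open>length (perm_coords \<sigma> a) = n\<close> by (simp add: \<sigma>_def)
  moreover have "0 < n"
    using j(1) by simp
  ultimately show ?thesis
    using \<sigma> fiber_shrinking_closest_first[OF definable_perm_coords[OF \<sigma> assms(2)]] by blast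
qed

end
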